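(* Let $H \le G$ be finite groups such that the interval $[H,G]$ is top Boolean. Then $[H,G]$ is $H$-cyclic, i.e. there exists $g \in G$ with $\langle H, g\rangle = G$.
   Context: The interval $[H,G]$ is the lattice of subgroups $K$ with $H \le K \le G$ (meet = intersection, join = generated subgroup). Its coatoms are the maximal elements of $[H,G]$ strictly below $G$. The top interval of $[H,G]$ is $[T,G]$ where $T$ is the intersection (meet) of all coatoms. A finite lattice is Boolean if it is isomorphic to the lattice of all subsets of a finite set; $[H,G]$ is top Boolean if its top interval is Boolean. $[H,G]$ is called $H$-cyclic if there is $g \in G$ with $\langle H,g\rangle = G$. *)

theory Defs
  imports "HOL-Algebra.Algebra"
begin

definition subgroup_interval :: "('a, 'b) monoid_scheme \<Rightarrow> 'a set \<Rightarrow> 'a set set" where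
  "subgroup_interval G H = {K. subgroup K G \<and> H \<subseteq> K}"

definition interval_coatoms :: "('a, 'b) monoid_scheme \<Rightarrow> 'a set \<Rightarrow> 'a set set" where
  "interval_coatoms G H = {K \<in> subgroup_interval G H. K \<noteq> carrier G \<and>
      (\<forall>K' \<in> subgroup_interval G H. K \<subseteq> K' \<longrightarrow> K' = K \<or> K' = carrier G)}"

text \<open>Meet of all coatoms in [H,G] (the empty meet is the top element G).\<close>
definition top_meet :: "('a, 'b) monoid_scheme \<Rightarrow> 'a set \<Rightarrow> 'a set" where
  "top_meet G H = carrier G \<inter> \<Inter> (interval_coatoms G H)"

definition boolean_lattice :: "'a set set \<Rightarrow> bool" where
  "boolean_lattice L \<longleftrightarrow> (\<exists>(S :: nat set) f. finite S \<and> bij_betw f L (Pow S) \<and>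
      (\<forall>x \<in> L. \<forall>y \<in> L. x \<subseteq> y \<longleftrightarrow> f x \<subseteq> f y))"

definition top_boolean :: "('a, 'b) monoid_scheme \<Rightarrow> 'a set \<Rightarrow> bool" where
  "top_boolean G H \<longleftrightarrow> boolean_lattice (subgroup_interval G (top_meet G H))"

end

theory Submission
  imports Defs
begin

text \<open>
  In the Boolean top interval every coatom \<open>M\<close> of \<open>[H,G]\<close> corresponds to the complement of a
  point \<open>s\<close>, and the atom corresponding to \<open>{s}\<close> provides an element \<open>x\<^sub>M\<close> lying in all coatoms
  except \<open>M\<close>. The product of all \<open>x\<^sub>M\<close> then lies in no coatom: multiplying by an element of a
  subgroup does not change membership in it. Since \<open>G\<close> is finite, every proper subgroup
  containing \<open>H\<close> lies below a coatom, so this product generates \<open>G\<close> together with \<open>H\<close>.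
\<close>

definition lattice_coatoms :: "'a set set \<Rightarrow> 'a set \<Rightarrow> 'a set set" where
  "lattice_coatoms L U = {M \<in> L. M \<noteq> U \<and> (\<forall>K \<in> L. M \<subseteq> K \<longrightarrow> K = M \<or> K = U)}"

lemma interval_coatoms_eq_lattice_coatoms:
  "interval_coatoms G H = lattice_coatoms (subgroup_interval G H) (carrier G)"
  unfolding interval_coatoms_def lattice_coatoms_def ..

lemma order_iso_Pow_coatom:
  assumes bij: "bij_betw f L (Pow S)"
    and ord: "\<forall>x \<in> L. \<forall>y \<in> L. x \<subseteq> y \<longleftrightarrow> f x \<subseteq> f y"
    and top: "U \<in> L" "\<forall>K \<in> L. K \<subseteq> U"
    and M: "M \<in> lattice_coatoms L U"
  shows "\<exists>s \<in> S. f M = S - {s}"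
proof -
  have M_in: "M \<in> L" and M_ne: "M \<noteq> U" using M unfolding lattice_coatoms_def by auto
  obtain V where V: "V \<in> L" "f V = S"
    using bij unfolding bij_betw_def by (metis Pow_top imageE)
  have "S \<subseteq> f U" using ord top V by auto
  moreover have "f U \<subseteq> S" using bij top unfolding bij_betw_def by auto
  ultimately have fU: "f U = S" by blast
  have "f M \<noteq> S"
    using M_ne M_in top fU bij_betw_imp_inj_on[OF bij] unfolding inj_on_def by metis
  moreover have fMS: "f M \<subseteq> S" using bij M_in unfolding bij_betw_def by auto
  ultimately obtain s where s: "s \<in> S" "s \<notin> f M" by auto
  obtain K where K: "K \<in> L" "f K = S - {s}"
    using bij unfolding bij_betw_def by (metis Diff_subset PowI imageE)
  have "M \<subseteq> K" using ord K M_in s fMS by auto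
  then have "K = M \<or> K = U" using M K(1) unfolding lattice_coatoms_def by blast
  moreover have "K \<noteq> U" using K fU s by auto
  ultimately show ?thesis using K s by auto
qed

lemma boolean_lattice_coatom_separated:
  assumes "boolean_lattice L" "U \<in> L" "\<forall>K \<in> L. K \<subseteq> U"
    and M0: "M0 \<in> lattice_coatoms L U"
  shows "\<exists>Y \<in> L. \<not> Y \<subseteq> M0 \<and> (\<forall>M \<in> lattice_coatoms L U - {M0}. Y \<subseteq> M)"
proof -
  obtain S :: "nat set" and f where bij: "bij_betw f L (Pow S)"
    and ord: "\<forall>x \<in> L. \<forall>y \<in> L. x \<subseteq> y \<longleftrightarrow> f x \<subseteq> f y"
    using assms(1) unfolding boolean_lattice_def by blast
  note coatom = order_iso_Pow_coatom[OF bij ord assms(2,3)]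
  have coatom_in: "M \<in> L" if "M \<in> lattice_coatoms L U" for M
    using that unfolding lattice_coatoms_def by auto
  obtain s where s: "s \<in> S" "f M0 = S - {s}" using coatom[OF M0] by blast
  obtain Y where Y: "Y \<in> L" "f Y = {s}"
    using bij s unfolding bij_betw_def by (metis PowI empty_subsetI imageE insert_subset)
  have "Y \<subseteq> M" if M: "M \<in> lattice_coatoms L U - {M0}" for M
  proof -
    obtain t where t: "t \<in> S" "f M = S - {t}" using coatom M by blast
    have "t \<noteq> s"
    proof
      assume "t = s"
      then have "f M = f M0" using t s by simp
      then show False
        using M M0 coatom_in bij_betw_imp_inj_on[OF bij] unfolding inj_on_def by blast
    qed
    then show ?thesis using ord Y coatom_in M t s by auto
  qed
  moreover have "\<not> Y \<subseteq> M0" using ord Y coatom_in[OF M0] s by auto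
  ultimately show ?thesis using Y by blast
qed

lemma interval_coatoms_subset_top_interval:
  assumes "H \<subseteq> carrier G"
  shows "interval_coatoms G H \<subseteq> interval_coatoms G (top_meet G H)"
proof
  fix M assume M: "M \<in> interval_coatoms G H"
  have "H \<subseteq> top_meet G H"
    using assms unfolding top_meet_def interval_coatoms_def subgroup_interval_def by auto
  moreover have "top_meet G H \<subseteq> M" using M unfolding top_meet_def by auto
  ultimately have "subgroup_interval G (top_meet G H) \<subseteq> subgroup_interval G H"
    "M \<in> subgroup_interval G (top_meet G H)"
    using M unfolding subgroup_interval_def interval_coatoms_def by auto
  then show "M \<in> interval_coatoms G (top_meet G H)"
    using M unfolding interval_coatoms_def by blast
qed

lemma (in group) subgroup_mult_mem_iff_left:
  assumes "subgroup M G" "x \<in> M" "g \<in> carrier G"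
  shows "g \<otimes> x \<in> M \<longleftrightarrow> g \<in> M"
proof
  have xG: "x \<in> carrier G" using assms subgroup.subset by blast
  assume "g \<otimes> x \<in> M"
  then have "g \<otimes> x \<otimes> inv x \<in> M"
    using assms(1,2) subgroup.m_closed subgroup.m_inv_closed by metis
  moreover have "g \<otimes> x \<otimes> inv x = g" using xG assms(3) by (simp add: m_assoc)
  ultimately show "g \<in> M" by simp
next
  assume "g \<in> M"
  then show "g \<otimes> x \<in> M" by (rule subgroup.m_closed[OF assms(1) _ assms(2)])
qed

lemma (in group) subgroup_mult_mem_iff_right:
  assumes "subgroup M G" "g \<in> M" "x \<in> carrier G"
  shows "g \<otimes> x \<in> M \<longleftrightarrow> x \<in> M"
proof
  have gG: "g \<in> carrier G" using assms subgroup.subset by blast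
  assume "g \<otimes> x \<in> M"
  then have "inv g \<otimes> (g \<otimes> x) \<in> M"
    using assms(1,2) subgroup.m_closed subgroup.m_inv_closed by metis
  moreover have "inv g \<otimes> (g \<otimes> x) = x" using gG assms(3) by (simp add: m_assoc[symmetric])
  ultimately show "x \<in> M" by simp
next
  assume "x \<in> M"
  then show "g \<otimes> x \<in> M" by (rule subgroup.m_closed[OF assms(1) assms(2)])
qed

text \<open>
  The induction keeps \<open>g\<close> inside every subgroup not yet treated, so that multiplying by the
  next separating element neither repairs the earlier avoidances nor spoils the later ones.
\<close>

lemma (in group) exists_elem_avoiding_subgroups:
  assumes fin: "finite Ms" and sub: "\<And>M. M \<in> Ms \<Longrightarrow> subgroup M G"
    and sep: "\<And>M0. M0 \<in> Ms \<Longrightarrow> \<exists>x \<in> carrier G. x \<notin> M0 \<and> (\<forall>M \<in> Ms - {M0}. x \<in> M)"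
  shows "\<exists>g \<in> carrier G. \<forall>M \<in> Ms. g \<notin> M"
proof -
  have "\<exists>g \<in> carrier G. (\<forall>M \<in> C. g \<notin> M) \<and> (\<forall>M \<in> Ms - C. g \<in> M)" if "C \<subseteq> Ms" for C
    using finite_subset[OF that fin] that
  proof (induction C rule: finite_induct)
    case empty
    have "\<one> \<in> M" if "M \<in> Ms" for M using subgroup.one_closed[OF sub[OF that]] .
    then show ?case by blast
  next
    case (insert M0 C)
    obtain g where g: "g \<in> carrier G" "\<forall>M \<in> C. g \<notin> M" "\<forall>M \<in> Ms - C. g \<in> M"
      using insert by auto
    obtain x where x: "x \<in> carrier G" "x \<notin> M0" "\<forall>M \<in> Ms - {M0}. x \<in> M"
      using sep insert.prems by blast
    have "g \<otimes> x \<notin> M" if M: "M \<in> insert M0 C" for M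
    proof (cases "M = M0")
      case True
      have "g \<in> M0" using g(3) insert by blast
      then show ?thesis
        using subgroup_mult_mem_iff_right[OF sub _ x(1)] True x(2) insert.prems by blast
    next
      case False
      have "x \<in> M" "M \<in> C" using x(3) M False insert.prems by auto
      then show ?thesis
        using subgroup_mult_mem_iff_left[OF sub _ g(1)] g(2) insert.prems by blast
    qed
    moreover have "g \<otimes> x \<in> M" if "M \<in> Ms - insert M0 C" for M
      using that g(3) x(3) subgroup.m_closed[OF sub] by blast
    ultimately show ?case using g x by blast
  qed
  then show ?thesis by blast
qed

lemma (in group) interval_subgroup_le_coatom:
  assumes "finite (carrier G)" "K \<in> subgroup_interval G H" "K \<noteq> carrier G"
  shows "\<exists>M \<in> interval_coatoms G H. K \<subseteq> M"
proof -
  define A where "A = {K' \<in> subgroup_interval G H. K \<subseteq> K' \<and> K' \<noteq> carrier G}"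
  have "A \<subseteq> Pow (carrier G)"
    unfolding A_def subgroup_interval_def using subgroup.subset by blast
  then have "finite A" using assms(1) finite_subset by blast
  moreover have "K \<in> A" unfolding A_def using assms by blast
  ultimately obtain M where M: "M \<in> A" "\<forall>K' \<in> A. M \<subseteq> K' \<longrightarrow> M = K'"
    using finite_has_maximal by blast
  then have "M \<in> interval_coatoms G H"
    unfolding A_def interval_coatoms_def by blast
  then show ?thesis using M(1) unfolding A_def by blast
qed

lemma (in group) generate_eq_carrier_if_avoids_coatoms:
  assumes "finite (carrier G)" "subgroup H G" "g \<in> carrier G"
    and avoid: "\<forall>M \<in> interval_coatoms G H. g \<notin> M"
  shows "generate G (insert g H) = carrier G"
proof (rule ccontr)
  let ?K = "generate G (insert g H)"
  assume K_ne: "?K \<noteq> carrier G"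
  have "insert g H \<subseteq> carrier G" using assms(2,3) subgroup.subset by blast
  then have "subgroup ?K G" by (rule generate_is_subgroup)
  moreover have gH_K: "insert g H \<subseteq> ?K"
  proof
    fix y assume "y \<in> insert g H"
    then show "y \<in> ?K" by (rule generate.incl)
  qed
  ultimately have "?K \<in> subgroup_interval G H" unfolding subgroup_interval_def by blast
  then obtain M where "M \<in> interval_coatoms G H" "?K \<subseteq> M"
    using interval_subgroup_le_coatom[OF assms(1) _ K_ne] by blast
  then show False using avoid gH_K by blast
qed

theorem theorem2p4:
  fixes G (structure) and H :: "'a set"
  assumes "group G" and "finite (carrier G)" and "subgroup H G"
    and "top_boolean G H"
  shows "\<exists>g \<in> carrier G. generate G (insert g H) = carrier G"
proof -
  interpret group G by fact
  let ?L = "subgroup_interval G (top_meet G H)"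
  let ?C = "interval_coatoms G H"
  have top: "carrier G \<in> ?L" "\<forall>K \<in> ?L. K \<subseteq> carrier G"
    unfolding subgroup_interval_def top_meet_def using subgroup_self subgroup.subset by auto
  have C_sub: "?C \<subseteq> lattice_coatoms ?L (carrier G)"
    using interval_coatoms_subset_top_interval[OF subgroup.subset[OF assms(3)]]
    unfolding interval_coatoms_eq_lattice_coatoms .
  have sep: "\<exists>x \<in> carrier G. x \<notin> M0 \<and> (\<forall>M \<in> ?C - {M0}. x \<in> M)" if M0: "M0 \<in> ?C" for M0
  proof -
    obtain Y where Y: "Y \<in> ?L" "\<not> Y \<subseteq> M0" "\<forall>M \<in> lattice_coatoms ?L (carrier G) - {M0}. Y \<subseteq> M"
      using boolean_lattice_coatom_separated[OF assms(4)[unfolded top_boolean_def] top]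
        C_sub M0 by blast
    then obtain x where "x \<in> Y" "x \<notin> M0" by blast
    then show ?thesis using Y(1,3) top(2) C_sub by blast
  qed
  have C_subgroups: "\<And>M. M \<in> ?C \<Longrightarrow> subgroup M G"
    unfolding interval_coatoms_def subgroup_interval_def by blast
  then have "?C \<subseteq> Pow (carrier G)" using subgroup.subset by blast
  then have "finite ?C" using assms(2) finite_subset by blast
  then obtain g where "g \<in> carrier G" "\<forall>M \<in> ?C. g \<notin> M"
    using exists_elem_avoiding_subgroups[OF _ C_subgroups sep] by blast
  then show ?thesis using generate_eq_carrier_if_avoids_coatoms[OF assms(2,3)] by blast
qed

end
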